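(* Let $E, F, G$ be Banach lattices. (1) The set of almost Grothendieck operators from $E$ to $F$ is a closed linear subspace of $L(E;F)$, and if $T: E \to F$ is almost Grothendieck and $S: H \to E$ is any bounded linear operator from a Banach space $H$, then $T \circ S$ is almost Grothendieck. (2) If $T: E \to F$ is almost Grothendieck and $R: F \to G$ is a bounded operator whose adjoint $R': G' \to F'$ maps disjoint sequences to disjoint sequences, then $R \circ T: E \to G$ is almost Grothendieck.
   Context: A bounded operator $T: X \to F$ from a Banach space $X$ to a Banach lattice $F$ is almost Grothendieck if $T'y_n' \to 0$ weakly in $X'$ for every disjoint weak* null sequence $(y_n')$ in the dual Banach lattice $F'$. $L(E;F)$ denotes the Banach space of bounded linear operators with the operator norm. *)

theory Defs
  imports "HOL-Analysis.Analysis"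
begin

definition labs :: "'a::{lattice, uminus} \<Rightarrow> 'a" where
  "labs x = sup x (- x)"

class banach_lattice = banach + ordered_real_vector + lattice +
  assumes lattice_norm: "sup x (- x) \<le> sup y (- y) \<Longrightarrow> norm x \<le> norm y"

text \<open>Modulus of a functional f in the dual lattice F', evaluated at y \<ge> 0
  (Riesz--Kantorovich): |f|(y) = sup { f z : |z| \<le> y }.\<close>
definition dual_abs :: "('b::banach_lattice \<Rightarrow>\<^sub>L real) \<Rightarrow> 'b \<Rightarrow> real" where
  "dual_abs f y = Sup {f z | z. labs z \<le> y}"

text \<open>Disjointness in the dual Banach lattice F': |f| \<and> |g| = 0, i.e. for all x \<ge> 0,
  (|f| \<and> |g|)(x) = inf { |f|(y) + |g|(x - y) : 0 \<le> y \<le> x } = 0.\<close>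
definition dual_disjoint :: "('b::banach_lattice \<Rightarrow>\<^sub>L real) \<Rightarrow> ('b \<Rightarrow>\<^sub>L real) \<Rightarrow> bool" where
  "dual_disjoint f g \<longleftrightarrow>
     (\<forall>x. 0 \<le> x \<longrightarrow> Inf {dual_abs f y + dual_abs g (x - y) | y. 0 \<le> y \<and> y \<le> x} = 0)"

definition disjoint_seq :: "(nat \<Rightarrow> ('b::banach_lattice \<Rightarrow>\<^sub>L real)) \<Rightarrow> bool" where
  "disjoint_seq y \<longleftrightarrow> (\<forall>n m. n \<noteq> m \<longrightarrow> dual_disjoint (y n) (y m))"

definition weak_star_null :: "(nat \<Rightarrow> ('b::real_normed_vector \<Rightarrow>\<^sub>L real)) \<Rightarrow> bool" where
  "weak_star_null y \<longleftrightarrow> (\<forall>x. (\<lambda>n. y n x) \<longlonglongrightarrow> 0)"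

definition weakly_null :: "(nat \<Rightarrow> 'v::real_normed_vector) \<Rightarrow> bool" where
  "weakly_null v \<longleftrightarrow> (\<forall>\<phi> :: 'v \<Rightarrow>\<^sub>L real. (\<lambda>n. \<phi> (v n)) \<longlonglongrightarrow> 0)"

text \<open>The adjoint T' y' = y' \<circ> T.\<close>
definition almost_grothendieck :: "('a::banach \<Rightarrow>\<^sub>L 'b::banach_lattice) \<Rightarrow> bool" where
  "almost_grothendieck T \<longleftrightarrow>
     (\<forall>y. disjoint_seq y \<and> weak_star_null y \<longrightarrow> weakly_null (\<lambda>n. y n o\<^sub>L T))"

definition adjoint_preserves_disjoint :: "('b::banach_lattice \<Rightarrow>\<^sub>L 'c::banach_lattice) \<Rightarrow> bool" where
  "adjoint_preserves_disjoint R \<longleftrightarrow>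
     (\<forall>g. disjoint_seq g \<longrightarrow> disjoint_seq (\<lambda>n. g n o\<^sub>L R))"

end

theory Submission
  imports Defs
begin

text \<open>For a fixed disjoint weak* null sequence \<open>(y\<^sub>n)\<close>, the operators \<open>T\<close> with
  \<open>y\<^sub>n \<circ> T\<close> weakly null form a linear subspace; it is closed because, by the uniform
  boundedness principle, \<open>(y\<^sub>n)\<close> is norm bounded, so the functionals
  \<open>T \<mapsto> \<phi>(y\<^sub>n \<circ> T)\<close> are equicontinuous. The almost Grothendieck operators are the
  intersection of these subspaces. Composing with \<open>S\<close> on the right applies the bounded
  operator \<open>A \<mapsto> A \<circ> S\<close> to a weakly null sequence, which keeps it weakly null;
  composing with \<open>R\<close> on the left replaces \<open>(y\<^sub>n)\<close> by \<open>(y\<^sub>n \<circ> R)\<close>, which is again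
  weak* null and, by the hypothesis on \<open>R'\<close>, disjoint.\<close>

lemma norm_blinfun_le_of_ball:
  fixes f :: "'a::real_normed_vector \<Rightarrow>\<^sub>L 'b::real_normed_vector"
  assumes r: "r > 0" and bound: "\<And>x. x \<in> ball x0 r \<Longrightarrow> norm (f x) \<le> k"
  shows "norm f \<le> 4 * k / r"
proof (rule norm_blinfun_bound)
  have "0 \<le> k" using bound[of x0] r by (meson centre_in_ball norm_ge_zero order_trans)
  then show "0 \<le> 4 * k / r" using r by simp
next
  fix z
  show "norm (f z) \<le> 4 * k / r * norm z"
  proof (cases "z = 0")
    case False
    define w where "w = (r / 2 / norm z) *\<^sub>R z"
    have "norm w = r / 2" using False r by (simp add: w_def)
    then have "x0 + w \<in> ball x0 r" using r by (simp add: dist_norm)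
    then have fw: "norm (f w) \<le> 2 * k"
      using bound[of "x0 + w"] bound[of x0] r norm_triangle_ineq4[of "f (x0 + w)" "f x0"]
      by (simp add: blinfun.add_right)
    have "f z = (2 * norm z / r) *\<^sub>R f w"
      using False r by (simp add: w_def blinfun.scaleR_right)
    then have "norm (f z) = (2 * norm z / r) * norm (f w)" using r by simp
    also have "\<dots> \<le> (2 * norm z / r) * (2 * k)" using fw r by (intro mult_left_mono) auto
    finally show ?thesis by (simp add: mult_ac)
  qed simp
qed

theorem uniform_boundedness:
  fixes F :: "('a::banach \<Rightarrow>\<^sub>L 'b::real_normed_vector) set"
  assumes pointwise_bounded: "\<And>x. bounded ((\<lambda>f. blinfun_apply f x) ` F)"
  shows "bounded F"
proof -
  define A where "A k = {x. \<forall>f\<in>F. norm (f x) \<le> real k}" for k :: nat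
  have closed_A: "closed (A k)" for k
  proof -
    have "A k = (\<Inter>f\<in>F. {x. norm (blinfun_apply f x) \<le> real k})" by (auto simp: A_def)
    then show ?thesis by (auto intro!: closed_Collect_le continuous_intros)
  qed
  have A_cover: "\<Union>(range A) = UNIV"
  proof safe
    fix x
    obtain B where "\<forall>f\<in>F. norm (f x) \<le> B" using pointwise_bounded[of x] by (auto simp: bounded_iff)
    moreover obtain k where "B \<le> real k" using real_arch_simple by blast
    ultimately have "x \<in> A k" by (force simp: A_def)
    then show "x \<in> \<Union>(range A)" by blast
  qed simp
  have "\<exists>k. interior (A k) \<noteq> {}"
  proof (rule ccontr)
    assume "\<nexists>k. interior (A k) \<noteq> {}"
    then have "euclidean interior_of \<Union>(range A) = {}"
      by (intro Baire_category_alt) (auto simp: completely_metrizable_space_euclidean closed_A)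
    then show False using A_cover by simp
  qed
  then obtain k x0 r where "r > 0" "ball x0 r \<subseteq> A k"
    by (metis equals0I interior_subset open_contains_ball open_interior subset_trans)
  then have "\<forall>f\<in>F. norm f \<le> 4 * real k / r"
    by (intro ballI norm_blinfun_le_of_ball) (auto simp: A_def)
  then show ?thesis by (auto simp: bounded_iff)
qed

lemma weak_star_null_imp_bounded:
  fixes y :: "nat \<Rightarrow> ('a::banach \<Rightarrow>\<^sub>L real)"
  assumes "weak_star_null y"
  shows "bounded (range y)"
proof (rule uniform_boundedness)
  fix x
  have "(\<lambda>n. y n x) \<longlonglongrightarrow> 0" using assms by (simp add: weak_star_null_def)
  then show "bounded ((\<lambda>f. blinfun_apply f x) ` range y)"
    by (simp add: image_image convergent_imp_bounded)
qed

lemma closed_tendsto_zero_equibounded: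
  fixes f :: "nat \<Rightarrow> 'a::real_normed_vector \<Rightarrow> 'b::real_normed_vector"
  assumes lin: "\<And>n. linear (f n)" and bound: "\<And>n x. norm (f n x) \<le> C * norm x"
  shows "closed {x. (\<lambda>n. f n x) \<longlonglongrightarrow> 0}"
proof (rule closed_sequential_limits[THEN iffD2], intro allI impI, elim conjE)
  fix xs x
  assume xs: "\<forall>k. xs k \<in> {x. (\<lambda>n. f n x) \<longlonglongrightarrow> 0}" and lim: "xs \<longlonglongrightarrow> x"
  show "x \<in> {x. (\<lambda>n. f n x) \<longlonglongrightarrow> 0}"
  proof (simp, rule LIMSEQ_I)
    fix e :: real
    assume e: "0 < e"
    define D where "D = \<bar>C\<bar> + 1"
    have "C * norm y \<le> D * norm y" for y :: 'a
      by (intro mult_right_mono) (auto simp: D_def)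
    then have D: "D > 0" "\<And>n x. norm (f n x) \<le> D * norm x"
      using bound by (auto simp: D_def intro: order_trans)
    obtain k where k: "norm (x - xs k) < e / 2 / D"
      using LIMSEQ_D[OF lim, of "e / 2 / D"] e D by (auto simp: dist_norm norm_minus_commute)
    obtain N where N: "\<And>n. n \<ge> N \<Longrightarrow> norm (f n (xs k)) < e / 2"
      using LIMSEQ_D[of "\<lambda>n. f n (xs k)" 0 "e / 2"] xs e by auto
    have "norm (f n x) < e" if "n \<ge> N" for n
    proof -
      have "f n x = f n (xs k) + f n (x - xs k)" by (simp add: linear_diff[OF lin])
      then have "norm (f n x) \<le> norm (f n (xs k)) + D * norm (x - xs k)"
        by (metis D(2) add_left_mono norm_triangle_le)
      also have "\<dots> < e / 2 + D * (e / 2 / D)"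
        using N[OF that] k D(1) by (intro add_strict_mono mult_strict_left_mono) auto
      finally show ?thesis using D(1) by simp
    qed
    then show "\<exists>N. \<forall>n\<ge>N. norm (f n x - 0) < e" by auto
  qed
qed

lemma closed_weakly_null_image:
  fixes g :: "nat \<Rightarrow> 'a::real_normed_vector \<Rightarrow> 'b::real_normed_vector"
  assumes lin: "\<And>n. linear (g n)" and bound: "\<And>n x. norm (g n x) \<le> C * norm x"
  shows "closed {x. weakly_null (\<lambda>n. g n x)}"
proof -
  have "{x. weakly_null (\<lambda>n. g n x)} = (\<Inter>\<phi> :: 'b \<Rightarrow>\<^sub>L real. {x. (\<lambda>n. \<phi> (g n x)) \<longlonglongrightarrow> 0})"
    by (auto simp: weakly_null_def)
  moreover have "closed {x. (\<lambda>n. \<phi> (g n x)) \<longlonglongrightarrow> 0}" for \<phi> :: "'b \<Rightarrow>\<^sub>L real"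
  proof (rule closed_tendsto_zero_equibounded)
    show "linear (\<lambda>x. \<phi> (g n x))" for n
      using linear_compose[OF lin bounded_linear.linear[OF blinfun.bounded_linear_right]]
      by (simp add: o_def)
    show "norm (\<phi> (g n x)) \<le> (norm \<phi> * C) * norm x" for n x
      using norm_blinfun[of \<phi> "g n x"] mult_left_mono[OF bound[of n x] norm_ge_zero[of \<phi>]]
      by (simp add: mult.assoc)
  qed
  ultimately show ?thesis by auto
qed

lemma subspace_weakly_null_image:
  fixes g :: "nat \<Rightarrow> 'a::real_normed_vector \<Rightarrow> 'b::real_normed_vector"
  assumes lin: "\<And>n. linear (g n)"
  shows "subspace {x. weakly_null (\<lambda>n. g n x)}"
  unfolding subspace_def weakly_null_def
  by (auto simp: linear_0 linear_add linear_scale lin blinfun.add_right blinfun.scaleR_right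
      intro: tendsto_add_zero tendsto_mult_right_zero)

lemma weakly_null_bounded_linear_image:
  assumes "weakly_null v" and L: "bounded_linear L"
  shows "weakly_null (\<lambda>n. L (v n))"
  unfolding weakly_null_def
proof
  fix \<phi> :: "'b::real_normed_vector \<Rightarrow>\<^sub>L real"
  have "(\<lambda>n. (\<phi> o\<^sub>L Blinfun L) (v n)) \<longlonglongrightarrow> 0"
    using assms(1) by (simp only: weakly_null_def)
  then show "(\<lambda>n. \<phi> (L (v n))) \<longlonglongrightarrow> 0" by (simp add: bounded_linear_Blinfun_apply[OF L])
qed

lemma weak_star_null_compose:
  "weak_star_null y \<Longrightarrow> weak_star_null (\<lambda>n. y n o\<^sub>L R)"
  by (simp add: weak_star_null_def)

lemma blinfun_compose_assoc: "(a o\<^sub>L b) o\<^sub>L c = a o\<^sub>L (b o\<^sub>L c)"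
  by (rule blinfun_eqI) simp

lemma linear_blinfun_compose: "linear (\<lambda>T. f o\<^sub>L T)"
  by (rule bounded_linear.linear[OF
        bounded_bilinear.bounded_linear_right[OF bounded_bilinear_blinfun_compose]])

lemma almost_grothendieck_set_eq:
  "{T :: 'a::banach \<Rightarrow>\<^sub>L 'b::banach_lattice. almost_grothendieck T} =
    (\<Inter>y\<in>{y. disjoint_seq y \<and> weak_star_null y}. {T. weakly_null (\<lambda>n. y n o\<^sub>L T)})"
  by (auto simp: almost_grothendieck_def)

lemma closed_almost_grothendieck:
  "closed {T :: 'a::banach \<Rightarrow>\<^sub>L 'b::banach_lattice. almost_grothendieck T}"
proof -
  have "closed {T :: 'a \<Rightarrow>\<^sub>L 'b. weakly_null (\<lambda>n. y n o\<^sub>L T)}" if ws: "weak_star_null y" for y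
  proof -
    obtain B where B: "\<And>n. norm (y n) \<le> B"
      using weak_star_null_imp_bounded[OF ws] by (auto simp: bounded_iff)
    show ?thesis
    proof (rule closed_weakly_null_image)
      show "linear (\<lambda>T. y n o\<^sub>L T)" for n
        by (rule linear_blinfun_compose)
      show "norm (y n o\<^sub>L T) \<le> B * norm T" for n and T :: "'a \<Rightarrow>\<^sub>L 'b"
        using norm_blinfun_compose[of "y n" T] mult_right_mono[OF B[of n] norm_ge_zero[of T]]
        by linarith
    qed
  qed
  then show ?thesis by (auto simp: almost_grothendieck_set_eq)
qed

lemma subspace_almost_grothendieck:
  "subspace {T :: 'a::banach \<Rightarrow>\<^sub>L 'b::banach_lattice. almost_grothendieck T}"
  unfolding almost_grothendieck_set_eq
  by (auto intro!: subspace_Inter subspace_weakly_null_image linear_blinfun_compose)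

lemma almost_grothendieck_compose_right:
  fixes T :: "'a::banach \<Rightarrow>\<^sub>L 'b::banach_lattice" and S :: "'h::banach \<Rightarrow>\<^sub>L 'a"
  assumes "almost_grothendieck T"
  shows "almost_grothendieck (T o\<^sub>L S)"
proof -
  have "bounded_linear (\<lambda>A :: 'a \<Rightarrow>\<^sub>L real. A o\<^sub>L S)"
    by (rule bounded_bilinear.bounded_linear_left[OF bounded_bilinear_blinfun_compose])
  then show ?thesis
    using assms weakly_null_bounded_linear_image
    by (fastforce simp: almost_grothendieck_def blinfun_compose_assoc)
qed

lemma almost_grothendieck_compose_left:
  fixes T :: "'a::banach \<Rightarrow>\<^sub>L 'b::banach_lattice" and R :: "'b \<Rightarrow>\<^sub>L 'c::banach_lattice"
  assumes "almost_grothendieck T" and "adjoint_preserves_disjoint R"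
  shows "almost_grothendieck (R o\<^sub>L T)"
  using assms weak_star_null_compose
  by (fastforce simp: almost_grothendieck_def adjoint_preserves_disjoint_def blinfun_compose_assoc)

theorem mainTheorem12:
  shows "closed {T :: 'e::banach_lattice \<Rightarrow>\<^sub>L 'f::banach_lattice. almost_grothendieck T}
    \<and> subspace {T :: 'e \<Rightarrow>\<^sub>L 'f. almost_grothendieck T}
    \<and> (\<forall>(T :: 'e \<Rightarrow>\<^sub>L 'f) (S :: 'h::banach \<Rightarrow>\<^sub>L 'e).
          almost_grothendieck T \<longrightarrow> almost_grothendieck (T o\<^sub>L S))
    \<and> (\<forall>(T :: 'e \<Rightarrow>\<^sub>L 'f) (R :: 'f \<Rightarrow>\<^sub>L 'g::banach_lattice).
          almost_grothendieck T \<and> adjoint_preserves_disjoint R \<longrightarrow> almost_grothendieck (R o\<^sub>L T))"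
  by (simp add: closed_almost_grothendieck subspace_almost_grothendieck
      almost_grothendieck_compose_right almost_grothendieck_compose_left)

end
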